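(* Consider the finite-difference scheme described in the context, with grid parameters $T>0$, $M,N\ge 2$, $\tau=T/M$, $h=1/N$, nonnegative constants $\beta,\gamma,\delta,\mu$, $\varepsilon\in[0,1]$, diffusion constants $\sigma_i>0$, and given grid strategy values $\alpha^i_{k,j}$ with $\alpha^i_{k,0}=\alpha^i_{k,N}=0$, satisfying $h^2\le 4\tau\sigma_i^2$ and $\tau|\alpha^i_{k,j}|\le h/4$ for all $i,k,j$. Then for each $i\in\{S,I,R,C\}$ the solution satisfies $$\max_{0\le k\le M}\|m^{i,h}(t_k,\cdot)\|_{1,h}\le \|m^i_0(\cdot)\|_{1,h}+T\max_{0\le k\le M}\|f^{i,h}(t_k,\cdot)\|_{1,h},$$ where for a grid function $w$ on the points $x_{j+1/2}$, $\|w\|_{1,h}:=\sum_{j=0}^{N-1}|w_{j+1/2}|\,h$, $m^{i,h}(t_k,\cdot)=(m^{i,h}_{k,j+1/2})_{j}$, $m^i_0(\cdot)=(m^i_0(x_{j+1/2}))_j$, and $f^{i,h}(t_k,\cdot)=(f^{i,h}_{k,j+1/2})_j$.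
   Context: Grid: $t_k=k\tau$ ($k=0,\dots,M$), $x_j=jh$ ($j=0,\dots,N$), $x_{j+1/2}=(j+1/2)h$. The four compartments are $i\in\{S,I,R,C\}$. Grid strategy values $\alpha^i_{k,j}$ are given for $k=0,\dots,M$, $j=0,\dots,N$. For $k=1,\dots,M$, $j=0,\dots,N-1$ define $$\gamma^{i,1}_{k,j+1/2}=\tfrac{1}{8\tau}\big(1+\tfrac{4\tau}{h}\alpha^i_{k,j}\big),\quad \gamma^{i,2}_{k,j+1/2}=\tfrac{1}{8\tau}\big(3+\tfrac{4\tau}{h}\alpha^i_{k,j}\big)+\tfrac{1}{8\tau}\big(3-\tfrac{4\tau}{h}\alpha^i_{k,j+1}\big),\quad \gamma^{i,3}_{k,j+1/2}=\tfrac{1}{8\tau}\big(1-\tfrac{4\tau}{h}\alpha^i_{k,j+1}\big).$$ Unknowns are $m^{i,h}_{k,j+1/2}$, $k=0,\dots,M$, $j=0,\dots,N-1$, extended by ghost values (boundary condition) $m^{i,h}_{k,-1/2}:=m^{i,h}_{k,1/2}$, $m^{i,h}_{k,N+1/2}:=m^{i,h}_{k,N-1/2}$. Initial condition: $m^{i,h}_{0,j+1/2}=m^i_0(x_{j+1/2})$ for given functions $m^i_0$ on $[0,1]$. For $k=1,\dots,M$, $j=0,\dots,N-1$, each $i$: $$\Big(\tfrac{1}{8\tau}-\tfrac{\sigma_i^2}{2h^2}\Big)m^{i,h}_{k,j-1/2}+\Big(\tfrac{3}{4\tau}+\tfrac{\sigma_i^2}{h^2}\Big)m^{i,h}_{k,j+1/2}+\Big(\tfrac{1}{8\tau}-\tfrac{\sigma_i^2}{2h^2}\Big)m^{i,h}_{k,j+3/2}$$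 $$= f^{i,h}_{k-1,j+1/2}+\gamma^{i,1}_{k,j+1/2}m^{i,h}_{k-1,j-1/2}+\gamma^{i,2}_{k,j+1/2}m^{i,h}_{k-1,j+1/2}+\gamma^{i,3}_{k,j+1/2}m^{i,h}_{k-1,j+3/2},$$ where for every $k=0,\dots,M$, writing $m^i$ for $m^{i,h}_{k,j+1/2}$: $f^{S,h}_{k,j+1/2}=-\beta m^S m^I+\mu m^C$; $f^{I,h}_{k,j+1/2}=\beta m^S m^I+\varepsilon\beta m^C m^I-\gamma m^I$; $f^{R,h}_{k,j+1/2}=(1-\varepsilon)\beta m^C m^I+\gamma m^I-\delta m^R$; $f^{C,h}_{k,j+1/2}=\delta m^R-\beta m^C m^I-\mu m^C$. *)

theory Defs
  imports Complex_Main
begin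

datatype comp = cS | cI | cR | cC

text \<open>Grid unknowns are represented as m :: comp => nat => nat => real, where
  m i k j stands for m^{i,h}_{k,j+1/2} (k = 0..M, j = 0..N-1).
  Ghost values (Neumann-type boundary condition): the left neighbour of cell 0
  is cell 0 itself, the right neighbour of cell N-1 is cell N-1 itself.\<close>

definition mleft :: "(nat \<Rightarrow> real) \<Rightarrow> nat \<Rightarrow> real" where
  "mleft w j = (if j = 0 then w 0 else w (j - 1))"

definition mright :: "nat \<Rightarrow> (nat \<Rightarrow> real) \<Rightarrow> nat \<Rightarrow> real" where
  "mright N w j = (if j + 1 \<ge> N then w (N - 1) else w (j + 1))"

definition freact :: "real \<Rightarrow> real \<Rightarrow> real \<Rightarrow> real \<Rightarrow> real \<Rightarrow>
    (comp \<Rightarrow> nat \<Rightarrow> nat \<Rightarrow> real) \<Rightarrow> comp \<Rightarrow> nat \<Rightarrow> nat \<Rightarrow> real" where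
  "freact \<beta> \<gamma> \<delta> \<mu> \<epsilon> m i k j =
     (let S = m cS k j; I = m cI k j; R = m cR k j; C = m cC k j in
      case i of
        cS \<Rightarrow> - \<beta> * S * I + \<mu> * C
      | cI \<Rightarrow> \<beta> * S * I + \<epsilon> * \<beta> * C * I - \<gamma> * I
      | cR \<Rightarrow> (1 - \<epsilon>) * \<beta> * C * I + \<gamma> * I - \<delta> * R
      | cC \<Rightarrow> \<delta> * R - \<beta> * C * I - \<mu> * C)"

definition norm1h :: "nat \<Rightarrow> real \<Rightarrow> (nat \<Rightarrow> real) \<Rightarrow> real" where
  "norm1h N h w = (\<Sum>j<N. \<bar>w j\<bar> * h)"

definition gam1 :: "real \<Rightarrow> real \<Rightarrow> (nat \<Rightarrow> nat \<Rightarrow> real) \<Rightarrow> nat \<Rightarrow> nat \<Rightarrow> real" where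
  "gam1 \<tau> h a k j = 1 / (8 * \<tau>) * (1 + 4 * \<tau> / h * a k j)"

definition gam2 :: "real \<Rightarrow> real \<Rightarrow> (nat \<Rightarrow> nat \<Rightarrow> real) \<Rightarrow> nat \<Rightarrow> nat \<Rightarrow> real" where
  "gam2 \<tau> h a k j = 1 / (8 * \<tau>) * (3 + 4 * \<tau> / h * a k j)
                    + 1 / (8 * \<tau>) * (3 - 4 * \<tau> / h * a k (j + 1))"

definition gam3 :: "real \<Rightarrow> real \<Rightarrow> (nat \<Rightarrow> nat \<Rightarrow> real) \<Rightarrow> nat \<Rightarrow> nat \<Rightarrow> real" where
  "gam3 \<tau> h a k j = 1 / (8 * \<tau>) * (1 - 4 * \<tau> / h * a k (j + 1))"

definition scheme_eq ::
  "nat \<Rightarrow> real \<Rightarrow> real \<Rightarrow> (comp \<Rightarrow> real) \<Rightarrow> (comp \<Rightarrow> nat \<Rightarrow> nat \<Rightarrow> real)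
   \<Rightarrow> real \<Rightarrow> real \<Rightarrow> real \<Rightarrow> real \<Rightarrow> real
   \<Rightarrow> (comp \<Rightarrow> nat \<Rightarrow> nat \<Rightarrow> real) \<Rightarrow> comp \<Rightarrow> nat \<Rightarrow> nat \<Rightarrow> bool" where
  "scheme_eq N \<tau> h \<sigma> \<alpha> \<beta> \<gamma> \<delta> \<mu> \<epsilon> m i k j \<longleftrightarrow>
     (1 / (8 * \<tau>) - (\<sigma> i)\<^sup>2 / (2 * h\<^sup>2)) * mleft (m i k) j
     + (3 / (4 * \<tau>) + (\<sigma> i)\<^sup>2 / h\<^sup>2) * m i k j
     + (1 / (8 * \<tau>) - (\<sigma> i)\<^sup>2 / (2 * h\<^sup>2)) * mright N (m i k) j
   = freact \<beta> \<gamma> \<delta> \<mu> \<epsilon> m i (k - 1) j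
     + gam1 \<tau> h (\<alpha> i) k j * mleft (m i (k - 1)) j
     + gam2 \<tau> h (\<alpha> i) k j * m i (k - 1) j
     + gam3 \<tau> h (\<alpha> i) k j * mright N (m i (k - 1)) j"

end

theory Submission
  imports Defs
begin

text \<open>Multiply the scheme by \<open>\<tau>\<close>. The implicit side becomes the three-point stencil with
  weights \<open>a, 1 - 2a, a\<close>, where \<open>a = 1/8 - \<tau>\<sigma>\<^sup>2/(2h\<^sup>2) \<le> 0\<close> because \<open>h\<^sup>2 \<le> 4\<tau>\<sigma>\<^sup>2\<close>;
  having nonpositive off-diagonal weights and conserving mass, it cannot decrease the
  discrete L1 norm. The explicit side becomes \<open>\<tau> f\<close> plus the stencil with weights
  \<open>1/8 + q\<^sub>j, 3/4 + q\<^sub>j - q\<^sub>j\<^sub>+\<^sub>1, 1/8 - q\<^sub>j\<^sub>+\<^sub>1\<close>, \<open>q\<^sub>j = \<tau>\<alpha>\<^sub>k\<^sub>,\<^sub>j/(2h)\<close>, which are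
  nonnegative since \<open>\<tau>|\<alpha>| \<le> h/4\<close>; it conserves mass because the transport terms
  telescope and \<open>\<alpha>\<close> vanishes at both ends, so it cannot increase the L1 norm. Hence
  \<open>\<parallel>m\<^sub>k\<parallel> \<le> \<parallel>m\<^sub>k\<^sub>-\<^sub>1\<parallel> + \<tau>\<parallel>f\<^sub>k\<^sub>-\<^sub>1\<parallel>\<close>, and summing at most \<open>M = T/\<tau>\<close> such steps gives
  the bound.\<close>

definition stencil3 ::
  "nat \<Rightarrow> (nat \<Rightarrow> real) \<Rightarrow> (nat \<Rightarrow> real) \<Rightarrow> (nat \<Rightarrow> real) \<Rightarrow> (nat \<Rightarrow> real) \<Rightarrow> nat \<Rightarrow> real" where
  "stencil3 N a b c w j = a j * mleft w j + b j * w j + c j * mright N w j"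

definition explicit_stencil :: "nat \<Rightarrow> (nat \<Rightarrow> real) \<Rightarrow> (nat \<Rightarrow> real) \<Rightarrow> nat \<Rightarrow> real" where
  "explicit_stencil N q =
     stencil3 N (\<lambda>j. 1/8 + q j) (\<lambda>j. 3/4 + q j - q (Suc j)) (\<lambda>j. 1/8 - q (Suc j))"

lemma mleft_comp: "mleft (\<lambda>j. f (w j)) j = f (mleft w j)"
  by (simp add: mleft_def)

lemma mright_comp: "mright N (\<lambda>j. f (w j)) j = f (mright N w j)"
  by (simp add: mright_def)

lemma sum_mleft_mright:
  assumes "N \<ge> 1"
  shows "(\<Sum>j<N. mleft w j) + (\<Sum>j<N. mright N w j) = 2 * (\<Sum>j<N. w j)"
proof -
  obtain n where N: "N = Suc n" using assms by (cases N) auto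
  have "(\<Sum>j<N. mleft w j) = w 0 + (\<Sum>j<n. w j)"
    unfolding N sum.lessThan_Suc_shift by (simp add: mleft_def)
  moreover have "(\<Sum>j<N. mright N w j) = (\<Sum>j<n. w (Suc j)) + w n"
    unfolding N sum.lessThan_Suc by (auto simp: mright_def intro!: sum.cong)
  moreover have "(\<Sum>j<N. w j) = w 0 + (\<Sum>j<n. w (Suc j))"
    unfolding N sum.lessThan_Suc_shift ..
  moreover have "(\<Sum>j<N. w j) = (\<Sum>j<n. w j) + w n"
    unfolding N sum.lessThan_Suc ..
  ultimately show ?thesis by linarith
qed

lemma sum_stencil3_const:
  assumes "N \<ge> 1"
  shows "(\<Sum>j<N. stencil3 N (\<lambda>_. a) (\<lambda>_. d) (\<lambda>_. a) w j) = (d + 2 * a) * (\<Sum>j<N. w j)"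
proof -
  have "(\<Sum>j<N. stencil3 N (\<lambda>_. a) (\<lambda>_. d) (\<lambda>_. a) w j)
      = d * (\<Sum>j<N. w j) + a * ((\<Sum>j<N. mleft w j) + (\<Sum>j<N. mright N w j))"
    by (simp add: stencil3_def sum.distrib sum_distrib_left algebra_simps)
  then show ?thesis
    by (simp add: sum_mleft_mright[OF assms] algebra_simps)
qed

lemma sum_explicit_stencil:
  assumes "N \<ge> 1" "q 0 = 0" "q N = 0"
  shows "(\<Sum>j<N. explicit_stencil N q w j) = (\<Sum>j<N. w j)"
proof -
  have left: "mleft w (Suc j) = w j" for j
    by (simp add: mleft_def)
  have right: "q (Suc j) * mright N w j = q (Suc j) * w (Suc j)" if "j < N" for j
  proof (cases "Suc j < N")
    case False
    with that have "Suc j = N" by simp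
    with assms(3) show ?thesis by simp
  qed (simp add: mright_def)
  have pointwise: "explicit_stencil N q w j
      = 1/8 * (mleft w j + mright N w j) + 3/4 * w j
        + (q j * mleft w j - q (Suc j) * mleft w (Suc j))
        + (q j * w j - q (Suc j) * w (Suc j))" if "j < N" for j
    using right[OF that] by (simp add: explicit_stencil_def stencil3_def left algebra_simps) (metis)
  have "(\<Sum>j<N. explicit_stencil N q w j)
      = (\<Sum>j<N. 1/8 * (mleft w j + mright N w j) + 3/4 * w j
        + (q j * mleft w j - q (Suc j) * mleft w (Suc j))
        + (q j * w j - q (Suc j) * w (Suc j)))"
    by (rule sum.cong) (simp_all add: pointwise)
  also have "\<dots> = 1/8 * ((\<Sum>j<N. mleft w j) + (\<Sum>j<N. mright N w j)) + 3/4 * (\<Sum>j<N. w j)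
        + (\<Sum>j<N. q j * mleft w j - q (Suc j) * mleft w (Suc j))
        + (\<Sum>j<N. q j * w j - q (Suc j) * w (Suc j))"
    by (simp only: sum.distrib sum_distrib_left[symmetric])
  also have "\<dots> = (\<Sum>j<N. w j)"
    using assms sum_lessThan_telescope'[of "\<lambda>j. q j * mleft w j" N]
      sum_lessThan_telescope'[of "\<lambda>j. q j * w j" N]
    by (simp add: sum_mleft_mright)
  finally show ?thesis .
qed

lemma abs_stencil3_le_stencil3_abs:
  assumes "0 \<le> a j" "0 \<le> b j" "0 \<le> c j"
  shows "\<bar>stencil3 N a b c w j\<bar> \<le> stencil3 N a b c (\<lambda>j. \<bar>w j\<bar>) j"
  using assms abs_triangle_ineq[of "a j * mleft w j + b j * w j" "c j * mright N w j"]
    abs_triangle_ineq[of "a j * mleft w j" "b j * w j"]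
  by (simp add: stencil3_def mleft_comp mright_comp abs_mult)

lemma stencil3_abs_le_abs_stencil3:
  assumes "a j \<le> 0" "0 \<le> b j" "c j \<le> 0"
  shows "stencil3 N a b c (\<lambda>j. \<bar>w j\<bar>) j \<le> \<bar>stencil3 N a b c w j\<bar>"
proof -
  have "\<bar>b j * w j\<bar> \<le> \<bar>stencil3 N a b c w j\<bar> + \<bar>a j * mleft w j\<bar> + \<bar>c j * mright N w j\<bar>"
    unfolding stencil3_def by linarith
  with assms show ?thesis
    by (simp add: stencil3_def mleft_comp mright_comp abs_mult)
qed

lemma norm1h_eq_sum_abs: "norm1h N h w = h * (\<Sum>j<N. \<bar>w j\<bar>)"
  by (simp add: norm1h_def sum_distrib_left mult.commute)

lemma norm1h_add_le:
  assumes "0 \<le> h"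
  shows "norm1h N h (\<lambda>j. v j + w j) \<le> norm1h N h v + norm1h N h w"
  unfolding norm1h_def sum.distrib[symmetric] using assms
  by (intro sum_mono) (simp add: abs_triangle_ineq mult_right_mono flip: distrib_right)

lemma norm1h_scale: "norm1h N h (\<lambda>j. c * w j) = \<bar>c\<bar> * norm1h N h w"
  by (simp add: norm1h_def sum_distrib_left abs_mult mult.assoc)

lemma norm1h_le_implicit_stencil:
  assumes "0 \<le> h" "N \<ge> 1" "a \<le> 0" "d + 2 * a = 1"
  shows "norm1h N h w \<le> norm1h N h (stencil3 N (\<lambda>_. a) (\<lambda>_. d) (\<lambda>_. a) w)"
proof -
  have "(\<Sum>j<N. \<bar>w j\<bar>) = (\<Sum>j<N. stencil3 N (\<lambda>_. a) (\<lambda>_. d) (\<lambda>_. a) (\<lambda>j. \<bar>w j\<bar>) j)"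
    using sum_stencil3_const[OF assms(2)] assms(4) by simp
  also have "\<dots> \<le> (\<Sum>j<N. \<bar>stencil3 N (\<lambda>_. a) (\<lambda>_. d) (\<lambda>_. a) w j\<bar>)"
    using assms(3,4) by (intro sum_mono stencil3_abs_le_abs_stencil3) simp_all
  finally show ?thesis
    using assms(1) by (simp add: norm1h_eq_sum_abs mult_left_mono)
qed

lemma norm1h_explicit_stencil_le:
  assumes "0 \<le> h" "N \<ge> 1" "q 0 = 0" "q N = 0" "\<And>j. j \<le> N \<Longrightarrow> \<bar>q j\<bar> \<le> 1/8"
  shows "norm1h N h (explicit_stencil N q w) \<le> norm1h N h w"
proof -
  have "(\<Sum>j<N. \<bar>explicit_stencil N q w j\<bar>) \<le> (\<Sum>j<N. explicit_stencil N q (\<lambda>j. \<bar>w j\<bar>) j)"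
  proof (intro sum_mono)
    fix j assume "j \<in> {..<N}"
    then have "\<bar>q j\<bar> \<le> 1/8" "\<bar>q (Suc j)\<bar> \<le> 1/8"
      using assms(5) by simp_all
    then show "\<bar>explicit_stencil N q w j\<bar> \<le> explicit_stencil N q (\<lambda>j. \<bar>w j\<bar>) j"
      unfolding explicit_stencil_def by (intro abs_stencil3_le_stencil3_abs) auto
  qed
  also have "\<dots> = (\<Sum>j<N. \<bar>w j\<bar>)"
    using sum_explicit_stencil[OF assms(2-4)] .
  finally show ?thesis
    using assms(1) by (simp add: norm1h_eq_sum_abs mult_left_mono)
qed

lemma scheme_eq_stencil_form:
  assumes "0 < \<tau>" "0 < h" "scheme_eq N \<tau> h \<sigma> \<alpha> \<beta> \<gamma> \<delta> \<mu> \<epsilon> m i k j"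
  defines "a \<equiv> 1/8 - \<tau> * (\<sigma> i)\<^sup>2 / (2 * h\<^sup>2)"
  shows "stencil3 N (\<lambda>_. a) (\<lambda>_. 1 - 2 * a) (\<lambda>_. a) (m i k) j
    = \<tau> * freact \<beta> \<gamma> \<delta> \<mu> \<epsilon> m i (k - 1) j
      + explicit_stencil N (\<lambda>j. \<tau> * \<alpha> i k j / (2 * h)) (m i (k - 1)) j"
proof -
  define q where "q j = \<tau> * \<alpha> i k j / (2 * h)" for j
  define A where "A = 1 / (8 * \<tau>) - (\<sigma> i)\<^sup>2 / (2 * h\<^sup>2)"
  define D where "D = 3 / (4 * \<tau>) + (\<sigma> i)\<^sup>2 / h\<^sup>2"
  have off: "\<tau> * A = a" and diag: "\<tau> * D = 1 - 2 * a"
    using assms(1) unfolding a_def A_def D_def by (simp_all add: field_simps)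
  have g1: "\<tau> * gam1 \<tau> h (\<alpha> i) k j = 1/8 + q j"
    and g2: "\<tau> * gam2 \<tau> h (\<alpha> i) k j = 3/4 + q j - q (Suc j)"
    and g3: "\<tau> * gam3 \<tau> h (\<alpha> i) k j = 1/8 - q (Suc j)"
    using assms(1,2) unfolding gam1_def gam2_def gam3_def q_def by (simp_all add: field_simps)
  from assms(3) have "\<tau> * (A * mleft (m i k) j + D * m i k j + A * mright N (m i k) j)
   = \<tau> * (freact \<beta> \<gamma> \<delta> \<mu> \<epsilon> m i (k - 1) j
     + gam1 \<tau> h (\<alpha> i) k j * mleft (m i (k - 1)) j
     + gam2 \<tau> h (\<alpha> i) k j * m i (k - 1) j
     + gam3 \<tau> h (\<alpha> i) k j * mright N (m i (k - 1)) j)"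
    unfolding scheme_eq_def A_def D_def by simp
  then have "(\<tau> * A) * mleft (m i k) j + (\<tau> * D) * m i k j + (\<tau> * A) * mright N (m i k) j
   = \<tau> * freact \<beta> \<gamma> \<delta> \<mu> \<epsilon> m i (k - 1) j
     + (\<tau> * gam1 \<tau> h (\<alpha> i) k j) * mleft (m i (k - 1)) j
     + (\<tau> * gam2 \<tau> h (\<alpha> i) k j) * m i (k - 1) j
     + (\<tau> * gam3 \<tau> h (\<alpha> i) k j) * mright N (m i (k - 1)) j"
    by (simp add: algebra_simps)
  then show ?thesis
    unfolding off diag g1 g2 g3 stencil3_def explicit_stencil_def q_def by (simp add: add.assoc)
qed

lemma norm1h_scheme_step:
  assumes "0 < \<tau>" "0 < h" "N \<ge> 1" "h\<^sup>2 \<le> 4 * \<tau> * (\<sigma> i)\<^sup>2"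
    and "\<alpha> i k 0 = 0" "\<alpha> i k N = 0" "\<And>j. j \<le> N \<Longrightarrow> \<tau> * \<bar>\<alpha> i k j\<bar> \<le> h / 4"
    and "\<And>j. j < N \<Longrightarrow> scheme_eq N \<tau> h \<sigma> \<alpha> \<beta> \<gamma> \<delta> \<mu> \<epsilon> m i k j"
  shows "norm1h N h (m i k)
    \<le> norm1h N h (m i (k - 1)) + \<tau> * norm1h N h (freact \<beta> \<gamma> \<delta> \<mu> \<epsilon> m i (k - 1))"
proof -
  define a where "a = 1/8 - \<tau> * (\<sigma> i)\<^sup>2 / (2 * h\<^sup>2)"
  define q where "q j = \<tau> * \<alpha> i k j / (2 * h)" for j
  define f where "f = freact \<beta> \<gamma> \<delta> \<mu> \<epsilon> m i (k - 1)"
  have "a \<le> 0"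
    using assms(2,4) unfolding a_def by (simp add: field_simps)
  have q_small: "\<bar>q j\<bar> \<le> 1/8" if "j \<le> N" for j
    using assms(7)[OF that] assms(1,2) unfolding q_def by (simp add: abs_mult field_simps)
  have "norm1h N h (m i k) \<le> norm1h N h (stencil3 N (\<lambda>_. a) (\<lambda>_. 1 - 2 * a) (\<lambda>_. a) (m i k))"
    using assms(2,3) \<open>a \<le> 0\<close> by (intro norm1h_le_implicit_stencil) simp_all
  also have "\<dots> = norm1h N h (\<lambda>j. \<tau> * f j + explicit_stencil N q (m i (k - 1)) j)"
    unfolding norm1h_def a_def f_def q_def
    using scheme_eq_stencil_form[OF assms(1,2,8)] by (intro sum.cong) simp_all
  also have "\<dots> \<le> \<tau> * norm1h N h f + norm1h N h (explicit_stencil N q (m i (k - 1)))"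
    using norm1h_add_le[of h N "\<lambda>j. \<tau> * f j"] assms(1,2) by (simp add: norm1h_scale)
  also have "\<dots> \<le> \<tau> * norm1h N h f + norm1h N h (m i (k - 1))"
    using assms(2,3,5,6) q_small by (simp add: norm1h_explicit_stencil_le q_def)
  finally show ?thesis
    unfolding f_def by simp
qed

lemma Max_le_of_increments:
  fixes u F :: "nat \<Rightarrow> real"
  assumes step: "\<And>k. 1 \<le> k \<Longrightarrow> k \<le> M \<Longrightarrow> u k \<le> u (k - 1) + c * F (k - 1)"
    and "0 \<le> c" and "\<And>k. k \<le> M \<Longrightarrow> 0 \<le> F k"
  shows "Max (u ` {..M}) \<le> u 0 + real M * c * Max (F ` {..M})"
proof -
  define Fmax where "Fmax = Max (F ` {..M})"
  have F_le: "F k \<le> Fmax" if "k \<le> M" for k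
    unfolding Fmax_def using that by (intro Max_ge) auto
  have "0 \<le> Fmax"
    using assms(3)[of 0] F_le[of 0] by simp
  have "u k \<le> u 0 + real k * c * Fmax" if "k \<le> M" for k
    using that
  proof (induction k)
    case (Suc k)
    have "c * F k \<le> c * Fmax"
      using F_le[of k] Suc.prems \<open>0 \<le> c\<close> by (simp add: mult_left_mono)
    then have "u (Suc k) \<le> u k + c * Fmax"
      using step[of "Suc k"] Suc.prems by simp
    with Suc show ?case
      by (simp add: algebra_simps)
  qed simp
  moreover have "real k * c * Fmax \<le> real M * c * Fmax" if "k \<le> M" for k
    using that \<open>0 \<le> c\<close> \<open>0 \<le> Fmax\<close> by (simp add: mult_right_mono)
  ultimately show ?thesis
    unfolding Fmax_def[symmetric] by (subst Max_le_iff) (force+)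
qed

theorem proposition2:
  fixes T :: real and M N :: nat and \<tau> h :: real
    and \<beta> \<gamma> \<delta> \<mu> \<epsilon> :: real
    and \<sigma> :: "comp \<Rightarrow> real"
    and \<alpha> :: "comp \<Rightarrow> nat \<Rightarrow> nat \<Rightarrow> real"
    and m0 :: "comp \<Rightarrow> real \<Rightarrow> real"
    and m :: "comp \<Rightarrow> nat \<Rightarrow> nat \<Rightarrow> real"
  assumes "T > 0" and "M \<ge> 2" and "N \<ge> 2"
    and "\<tau> = T / real M" and "h = 1 / real N"
    and "\<beta> \<ge> 0" and "\<gamma> \<ge> 0" and "\<delta> \<ge> 0" and "\<mu> \<ge> 0"
    and "0 \<le> \<epsilon>" and "\<epsilon> \<le> 1"
    and "\<And>i. \<sigma> i > 0"
    and "\<And>i k. k \<le> M \<Longrightarrow> \<alpha> i k 0 = 0"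
    and "\<And>i k. k \<le> M \<Longrightarrow> \<alpha> i k N = 0"
    and "\<And>i. h\<^sup>2 \<le> 4 * \<tau> * (\<sigma> i)\<^sup>2"
    and "\<And>i k j. k \<le> M \<Longrightarrow> j \<le> N \<Longrightarrow> \<tau> * \<bar>\<alpha> i k j\<bar> \<le> h / 4"
    and init: "\<And>i j. j < N \<Longrightarrow> m i 0 j = m0 i ((real j + 1 / 2) * h)"
    and scheme: "\<And>i k j. 1 \<le> k \<Longrightarrow> k \<le> M \<Longrightarrow> j < N \<Longrightarrow>
                   scheme_eq N \<tau> h \<sigma> \<alpha> \<beta> \<gamma> \<delta> \<mu> \<epsilon> m i k j"
  shows "\<forall>i. Max ((\<lambda>k. norm1h N h (m i k)) ` {..M})
           \<le> norm1h N h (\<lambda>j. m0 i ((real j + 1 / 2) * h))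
             + T * Max ((\<lambda>k. norm1h N h (freact \<beta> \<gamma> \<delta> \<mu> \<epsilon> m i k)) ` {..M})"
proof
  fix i
  have "0 < \<tau>" "0 < h" "N \<ge> 1" and T_eq: "real M * \<tau> = T"
    using assms(1-5) by simp_all
  have "norm1h N h (m i k) \<le> norm1h N h (m i (k - 1))
          + \<tau> * norm1h N h (freact \<beta> \<gamma> \<delta> \<mu> \<epsilon> m i (k - 1))"
    if "1 \<le> k" "k \<le> M" for k
    using \<open>0 < \<tau>\<close> \<open>0 < h\<close> \<open>N \<ge> 1\<close> assms(13-16) that scheme
    by (intro norm1h_scheme_step[where \<sigma> = \<sigma> and \<alpha> = \<alpha>]) simp_all
  then have "Max ((\<lambda>k. norm1h N h (m i k)) ` {..M})
      \<le> norm1h N h (m i 0)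
        + real M * \<tau> * Max ((\<lambda>k. norm1h N h (freact \<beta> \<gamma> \<delta> \<mu> \<epsilon> m i k)) ` {..M})"
    using \<open>0 < \<tau>\<close> \<open>0 < h\<close> by (intro Max_le_of_increments) (simp_all add: norm1h_eq_sum_abs)
  moreover have "norm1h N h (m i 0) = norm1h N h (\<lambda>j. m0 i ((real j + 1 / 2) * h))"
    unfolding norm1h_def using init by simp
  ultimately show "Max ((\<lambda>k. norm1h N h (m i k)) ` {..M})
      \<le> norm1h N h (\<lambda>j. m0 i ((real j + 1 / 2) * h))
        + T * Max ((\<lambda>k. norm1h N h (freact \<beta> \<gamma> \<delta> \<mu> \<epsilon> m i k)) ` {..M})"
    by (simp add: T_eq)
qed

end
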